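(* Let $\sigma_j=1/\log_2(j+1)$, $j\ge1$, and $\mathcal{K}(\sigma)=\{\sigma_je_j\}_{j=1}^\infty\cup\{0\}\subset c_0$. Then $\tilde\varepsilon_n(\mathcal{K}(\sigma))_{c_0}\asymp\frac1n$ for $n\ge1$, and for every $\gamma>2$, $d_n^\gamma(\mathcal{K}(\sigma))_{c_0}\asymp\frac{1}{n\log_2(n+1)}$ for $n\ge1$.
   Context: $c_0$ denotes the Banach space of real sequences converging to $0$ with the norm $\|x\|=\sup_j|x_j|$, and $(e_j)$ is its standard unit vector basis. $a_n\asymp b_n$ means there are constants $0<c\le C$ independent of $n$ (possibly depending on $\gamma$) with $cb_n\le a_n\le Cb_n$. The inner entropy number $\tilde\varepsilon_n(\mathcal{K})_{c_0}$ is the infimum of all $\varepsilon>0$ such that $\mathcal{K}$ is covered by $2^n$ closed balls of radius $\varepsilon$ with centers in $\mathcal{K}$. For $k\ge1$ and a norm $\|\cdot\|_{Y_k}$ on $\mathbb{R}^k$ let $B_{Y_k}=\{y\in\mathbb{R}^k:\|y\|_{Y_k}\le1\}$; $d^\gamma(\mathcal{K},Y_k)_{c_0}=\inf_{\Phi}\sup_{f\in\mathcal{K}}\inf_{y\in B_{Y_k}}\|f-\Phi(y)\|$, the infimum over all maps $\Phi:B_{Y_k}\to c_0$ with $\|\Phi(y)-\Phi(y')\|\le\gamma\|y-y'\|_{Y_k}$; and $d_n^\gamma(\mathcal{K})_{c_0}=\inf_{1\le k\le n}\inf_{\|\cdot\|_{Y_k}}d^\gamma(\mathcal{K},Y_k)_{c_0}$,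 the inner infimum over all norms on $\mathbb{R}^k$. *)

theory Defs
  imports "HOL-Analysis.Analysis"
begin

text \<open>The space c_0: real sequences tending to 0 (coordinates indexed by nat,
  coordinate k corresponding to the paper's index j = k+1), with the sup norm.\<close>

definition c0 :: "(nat \<Rightarrow> real) set" where
  "c0 = {x. x \<longlonglongrightarrow> 0}"

definition c0norm :: "(nat \<Rightarrow> real) \<Rightarrow> real" where
  "c0norm x = (SUP j. \<bar>x j\<bar>)"

definition unitvec :: "nat \<Rightarrow> nat \<Rightarrow> real" where
  "unitvec k = (\<lambda>i. if i = k then 1 else 0)"

definition sigma :: "nat \<Rightarrow> real" where
  "sigma j = 1 / log 2 (real j + 1)"

definition Ksigma :: "(nat \<Rightarrow> real) set" where
  "Ksigma = {(\<lambda>i. sigma (k + 1) * unitvec k i) | k. True} \<union> {(\<lambda>i. 0)}"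

definition inner_entropy :: "(nat \<Rightarrow> real) set \<Rightarrow> nat \<Rightarrow> real" where
  "inner_entropy K n = Inf {eps. eps > 0 \<and>
     (\<exists>C. C \<subseteq> K \<and> finite C \<and> card C \<le> 2 ^ n \<and>
        (\<forall>f\<in>K. \<exists>c\<in>C. c0norm (\<lambda>i. f i - c i) \<le> eps))}"

text \<open>R^k is represented as the sequences vanishing from index k on.\<close>
definition Rk :: "nat \<Rightarrow> (nat \<Rightarrow> real) set" where
  "Rk k = {y. \<forall>i\<ge>k. y i = 0}"

definition is_norm_on_Rk :: "nat \<Rightarrow> ((nat \<Rightarrow> real) \<Rightarrow> real) \<Rightarrow> bool" where
  "is_norm_on_Rk k N \<longleftrightarrow>
     (\<forall>x\<in>Rk k. N x \<ge> 0 \<and> (N x = 0 \<longleftrightarrow> x = (\<lambda>i. 0))) \<and>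
     (\<forall>x\<in>Rk k. \<forall>c::real. N (\<lambda>i. c * x i) = \<bar>c\<bar> * N x) \<and>
     (\<forall>x\<in>Rk k. \<forall>y\<in>Rk k. N (\<lambda>i. x i + y i) \<le> N x + N y)"

definition unit_ball_Rk :: "nat \<Rightarrow> ((nat \<Rightarrow> real) \<Rightarrow> real) \<Rightarrow> (nat \<Rightarrow> real) set" where
  "unit_ball_Rk k N = {y \<in> Rk k. N y \<le> 1}"

definition lip_maps ::
  "real \<Rightarrow> nat \<Rightarrow> ((nat \<Rightarrow> real) \<Rightarrow> real) \<Rightarrow> ((nat \<Rightarrow> real) \<Rightarrow> (nat \<Rightarrow> real)) set" where
  "lip_maps \<gamma> k N = {\<Phi>. (\<forall>y\<in>unit_ball_Rk k N. \<Phi> y \<in> c0) \<and>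
     (\<forall>y\<in>unit_ball_Rk k N. \<forall>y'\<in>unit_ball_Rk k N.
        c0norm (\<lambda>i. \<Phi> y i - \<Phi> y' i) \<le> \<gamma> * N (\<lambda>i. y i - y' i))}"

definition lip_width_fixed ::
  "real \<Rightarrow> (nat \<Rightarrow> real) set \<Rightarrow> nat \<Rightarrow> ((nat \<Rightarrow> real) \<Rightarrow> real) \<Rightarrow> real" where
  "lip_width_fixed \<gamma> K k N =
     (INF \<Phi>\<in>lip_maps \<gamma> k N. SUP f\<in>K. INF y\<in>unit_ball_Rk k N. c0norm (\<lambda>i. f i - \<Phi> y i))"

definition lip_width :: "real \<Rightarrow> (nat \<Rightarrow> real) set \<Rightarrow> nat \<Rightarrow> real" where
  "lip_width \<gamma> K n =
     Inf {lip_width_fixed \<gamma> K k N | k N. 1 \<le> k \<and> k \<le> n \<and> is_norm_on_Rk k N}"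

end

theory Submission
  imports Defs "Jordan_Normal_Form.Determinant" "HOL-Real_Asymp.Real_Asymp"
begin

text \<open>
  The spike sigma_j e_j has distance at least sigma_j from every other point of
  K(sigma). Hence a cover of radius below sigma_(2^n) needs each of the first 2^n spikes and 0
  as centres, whereas 0 together with the first 2^n - 1 spikes covers at radius
  sigma_(2^n) <= 1/n.

  In R^k with the sup norm, k = 1 + 2^r + m <= n, there are points p_i,
  i < 2^(2^r) + 2^((r+1) m), with sigma_(i'+1) <= 2 |p_i - p_i'|. The tent map
  y \<mapsto> (max 0 (sigma_(i+1) - 2 |y - p_i|))_i is 2-Lipschitz and sends p_i to the i-th
  spike, and the remaining spikes are within 1/((r+1) m) of 0. Taking 2^r ~ sqrt n and
  m ~ n/2 gives the bound 1/(n log n).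

  If a gamma-Lipschitz image of the unit ball of a k-dimensional normed
  space approximates K(sigma) within delta, then preimages of the spikes with
  sigma_j >= 3 delta form a (delta/gamma)-separated set in the ball. By a packing argument
  based on Auerbach's lemma such a set has at most (2 k gamma/delta + 1)^k points, while for
  delta = c/(n log n) and k <= n there are more such spikes.
\<close>

section \<open>The sup norm\<close>

lemma bounded_imp_Bseq: "(\<And>i. \<bar>f i\<bar> \<le> B) \<Longrightarrow> Bseq (f :: nat \<Rightarrow> real)"
  by (rule BseqI'[where K=B]) simp

lemma Bseq_diff:
  assumes "Bseq x" "Bseq y"
  shows "Bseq (\<lambda>i. x i - y i :: real)"
proof -
  obtain K L where "\<And>i. \<bar>x i\<bar> \<le> K" "\<And>i. \<bar>y i\<bar> \<le> L"
    using assms by (metis BseqE real_norm_def)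
  then show ?thesis
    by (intro BseqI'[where K="K + L"]) (metis abs_triangle_ineq4 add_mono order_trans real_norm_def)
qed

lemma c0norm_upper: "Bseq x \<Longrightarrow> \<bar>x j\<bar> \<le> c0norm x"
  unfolding c0norm_def by (rule cSUP_upper) (auto dest: Bseq_bdd_above')

lemma c0norm_least: "(\<And>j. \<bar>x j\<bar> \<le> B) \<Longrightarrow> c0norm x \<le> B"
  unfolding c0norm_def by (rule cSUP_least) auto

lemma c0norm_nonneg: "Bseq x \<Longrightarrow> 0 \<le> c0norm x"
  using c0norm_upper[of x 0] by simp

lemma c0norm_zero [simp]: "c0norm (\<lambda>i. 0) = 0"
  by (simp add: c0norm_def)

lemma c0norm_minus_commute: "c0norm (\<lambda>i. x i - y i) = c0norm (\<lambda>i. y i - x i)"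
  by (simp add: c0norm_def abs_minus_commute)

lemma c0norm_scale:
  assumes "Bseq x"
  shows "c0norm (\<lambda>i. c * x i) = \<bar>c\<bar> * c0norm x"
proof (cases "c = 0")
  case False
  have le: "c0norm (\<lambda>i. a * y i) \<le> \<bar>a\<bar> * c0norm y" if "Bseq y" for a y
    by (rule c0norm_least) (simp add: abs_mult mult_left_mono c0norm_upper[OF that])
  have "Bseq (\<lambda>i. c * x i)"
    using assms False by (simp add: Bseq_cmult_iff)
  from le[OF this, of "inverse c"] have "c0norm x \<le> \<bar>inverse c\<bar> * c0norm (\<lambda>i. c * x i)"
    using False by (simp add: field_simps)
  with le[OF assms, of c] False show ?thesis
    by (simp add: field_simps abs_inverse)
qed simp

lemma c0norm_triangle:
  assumes "Bseq x" "Bseq y"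
  shows "c0norm (\<lambda>i. x i + y i) \<le> c0norm x + c0norm y"
  by (rule c0norm_least, rule order_trans[OF abs_triangle_ineq add_mono])
    (use c0norm_upper assms in auto)

lemma c0norm_triangle_diff:
  assumes "Bseq x" "Bseq y" "Bseq z"
  shows "c0norm (\<lambda>i. x i - z i) \<le> c0norm (\<lambda>i. x i - y i) + c0norm (\<lambda>i. y i - z i)"
  using c0norm_triangle[of "\<lambda>i. x i - y i" "\<lambda>i. y i - z i"] assms by (simp add: Bseq_diff)

lemma c0norm_reverse_triangle:
  assumes "Bseq x" "Bseq y" "Bseq z"
  shows "\<bar>c0norm (\<lambda>i. x i - z i) - c0norm (\<lambda>i. y i - z i)\<bar> \<le> c0norm (\<lambda>i. x i - y i)"
  using c0norm_triangle_diff[of x y z] c0norm_triangle_diff[of y x z] c0norm_minus_commute[of x y] assms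
  by (simp add: abs_le_iff)

lemma c0_imp_Bseq: "x \<in> c0 \<Longrightarrow> Bseq x"
  unfolding c0_def by (auto intro: convergent_imp_Bseq convergentI)

lemma c0_if_eventually_zero: "(\<And>j. M \<le> j \<Longrightarrow> x j = 0) \<Longrightarrow> x \<in> c0"
  unfolding c0_def mem_Collect_eq by (rule tendsto_eventually) (auto simp: eventually_sequentially)

lemma Rk_subset_c0: "Rk k \<subseteq> c0"
  by (auto simp: Rk_def intro: c0_if_eventually_zero)

lemma Rk_imp_Bseq: "y \<in> Rk k \<Longrightarrow> Bseq y"
  using Rk_subset_c0 c0_imp_Bseq by blast

section \<open>Norms on R^k and packings of their unit balls\<close>

lemma Rk_sum: "finite J \<Longrightarrow> (\<And>j. j \<in> J \<Longrightarrow> v j \<in> Rk k) \<Longrightarrow> (\<lambda>i. \<Sum>j\<in>J. a j * v j i) \<in> Rk k"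
  by (auto simp: Rk_def)

lemma Rk_diff: "x \<in> Rk k \<Longrightarrow> y \<in> Rk k \<Longrightarrow> (\<lambda>i. x i - y i) \<in> Rk k"
  by (simp add: Rk_def)

lemma unit_ball_Rk_diff_Bseq:
  "x \<in> unit_ball_Rk k N \<Longrightarrow> y \<in> unit_ball_Rk k N \<Longrightarrow> Bseq (\<lambda>i. x i - y i)"
  by (auto simp: unit_ball_Rk_def intro: Rk_imp_Bseq Rk_diff)

lemma is_norm_on_Rk_nonneg: "is_norm_on_Rk k N \<Longrightarrow> x \<in> Rk k \<Longrightarrow> 0 \<le> N x"
  unfolding is_norm_on_Rk_def by blast

lemma is_norm_on_Rk_zero: "is_norm_on_Rk k N \<Longrightarrow> N (\<lambda>i. 0) = 0"
  unfolding is_norm_on_Rk_def Rk_def by simp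

lemma is_norm_on_Rk_scale: "is_norm_on_Rk k N \<Longrightarrow> x \<in> Rk k \<Longrightarrow> N (\<lambda>i. c * x i) = \<bar>c\<bar> * N x"
  unfolding is_norm_on_Rk_def by blast

lemma is_norm_on_Rk_add:
  "is_norm_on_Rk k N \<Longrightarrow> x \<in> Rk k \<Longrightarrow> y \<in> Rk k \<Longrightarrow> N (\<lambda>i. x i + y i) \<le> N x + N y"
  unfolding is_norm_on_Rk_def by blast

lemma is_norm_on_Rk_sum_le:
  assumes N: "is_norm_on_Rk k N" and "finite J" and v: "\<And>j. j \<in> J \<Longrightarrow> v j \<in> Rk k"
  shows "N (\<lambda>i. \<Sum>j\<in>J. a j * v j i) \<le> (\<Sum>j\<in>J. \<bar>a j\<bar> * N (v j))"
  using \<open>finite J\<close> v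
proof (induction J rule: finite_induct)
  case empty
  then show ?case using is_norm_on_Rk_zero[OF N] by simp
next
  case (insert j J)
  have "N (\<lambda>i. \<Sum>j\<in>insert j J. a j * v j i) = N (\<lambda>i. a j * v j i + (\<Sum>j\<in>J. a j * v j i))"
    using insert by simp
  also have "\<dots> \<le> N (\<lambda>i. a j * v j i) + N (\<lambda>i. \<Sum>j\<in>J. a j * v j i)"
    using insert by (intro is_norm_on_Rk_add[OF N] Rk_sum) (auto simp: Rk_def)
  also have "\<dots> \<le> \<bar>a j\<bar> * N (v j) + (\<Sum>j\<in>J. \<bar>a j\<bar> * N (v j))"
    using insert is_norm_on_Rk_scale[OF N] by simp
  finally show ?case using insert by simp
qed

lemma c0norm_is_norm_on_Rk: "is_norm_on_Rk k c0norm"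
  unfolding is_norm_on_Rk_def
proof (intro conjI ballI allI)
  fix x y c assume x: "x \<in> Rk k" and y: "y \<in> Rk k"
  note Bx = Rk_imp_Bseq[OF x]
  show "0 \<le> c0norm x" by (rule c0norm_nonneg[OF Bx])
  show "c0norm x = 0 \<longleftrightarrow> x = (\<lambda>i. 0)"
    using c0norm_upper[OF Bx] by (fastforce simp: fun_eq_iff)
  show "c0norm (\<lambda>i. c * x i) = \<bar>c\<bar> * c0norm x"
    by (rule c0norm_scale[OF Bx])
  show "c0norm (\<lambda>i. x i + y i) \<le> c0norm x + c0norm y"
    by (rule c0norm_triangle[OF Bx Rk_imp_Bseq[OF y]])
qed

definition col_mat :: "nat \<Rightarrow> (nat \<Rightarrow> nat \<Rightarrow> real) \<Rightarrow> real mat" where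
  "col_mat k t = mat k k (\<lambda>(i, j). t j i)"

lemma col_mat_carrier: "col_mat k t \<in> carrier_mat k k"
  by (simp add: col_mat_def)

lemma obtain_max_det_columns:
  assumes "finite V" and "b \<in> PiE {..<k} (\<lambda>_. V)" and "det (col_mat k b) \<noteq> 0"
  obtains t where "t \<in> PiE {..<k} (\<lambda>_. V)" and "det (col_mat k t) \<noteq> 0"
    and "\<And>t'. t' \<in> PiE {..<k} (\<lambda>_. V) \<Longrightarrow> \<bar>det (col_mat k t')\<bar> \<le> \<bar>det (col_mat k t)\<bar>"
proof -
  let ?T = "PiE {..<k} (\<lambda>_. V)" and ?D = "\<lambda>t. \<bar>det (col_mat k t)\<bar>"
  have fin: "finite (?D ` ?T)"
    using assms(1) by (simp add: finite_PiE)
  obtain t where t: "t \<in> ?T" "?D t = Max (?D ` ?T)"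
    using Max_in[OF fin] assms(2) by fastforce
  have max: "?D t' \<le> ?D t" if "t' \<in> ?T" for t'
    using Max_ge[OF fin] that t(2) by simp
  show thesis
    using that[OF t(1) _ max] max[OF assms(2)] assms(3) by fastforce
qed

lemma col_mat_coordinates:
  assumes det: "det (col_mat k t) \<noteq> 0" and s: "s \<in> Rk k" and t: "\<And>j. j < k \<Longrightarrow> t j \<in> Rk k"
  obtains x :: "nat \<Rightarrow> real" where "s = (\<lambda>i. \<Sum>j<k. x j * t j i)"
    and "\<And>j. j < k \<Longrightarrow> x j * det (col_mat k t) = det (col_mat k (t(j := s)))"
proof -
  define A where "A = col_mat k t"
  have A: "A \<in> carrier_mat k k"
    by (simp add: A_def col_mat_carrier)
  obtain B where B: "B \<in> carrier_mat k k" and AB: "A * B = 1\<^sub>m k"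
    using det_non_zero_imp_unit[OF A det[folded A_def], of "()"]
    unfolding Units_def ring_mat_def by auto
  define x where "x = B *\<^sub>v vec k s"
  have x: "x \<in> carrier_vec k" and Ax: "A *\<^sub>v x = vec k s"
    using B AB by (auto simp: x_def assoc_mult_mat_vec[OF A B, symmetric])
  show thesis
  proof (rule that[of "\<lambda>j. x $ j"])
    show "s = (\<lambda>i. \<Sum>j<k. x $ j * t j i)"
    proof
      fix i
      show "s i = (\<Sum>j<k. x $ j * t j i)"
      proof (cases "i < k")
        case True
        then have "s i = (\<Sum>j<k. A $$ (i, j) * x $ j)"
          using A x arg_cong[OF Ax, of "\<lambda>v. v $ i"] by (simp add: scalar_prod_def atLeast0LessThan)
        then show ?thesis
          using True by (simp add: A_def col_mat_def mult.commute)
      qed (use s t in \<open>auto simp: Rk_def\<close>)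
    qed
    show "x $ j * det (col_mat k t) = det (col_mat k (t(j := s)))" if "j < k" for j
    proof -
      have "x $ j * det A = det (replace_col A (A *\<^sub>v x) j)"
        by (rule cramer_lemma_mat[OF A x that, symmetric])
      also have "replace_col A (A *\<^sub>v x) j = col_mat k (t(j := s))"
        unfolding Ax by (rule eq_matI) (auto simp: replace_col_def col_mat_def A_def)
      finally show ?thesis
        by (simp add: A_def)
    qed
  qed
qed

lemma obtain_scaled_unitvecs_in_unit_ball:
  assumes N: "is_norm_on_Rk k N"
  obtains \<epsilon> :: real where "0 < \<epsilon>" and "\<And>j. j < k \<Longrightarrow> (\<lambda>i. \<epsilon> * unitvec j i) \<in> unit_ball_Rk k N"
proof
  let ?S = "\<Sum>j<k. N (unitvec j)"
  have unit_Rk: "unitvec j \<in> Rk k" if "j < k" for j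
    using that by (auto simp: unitvec_def Rk_def)
  have S: "0 \<le> ?S"
    using is_norm_on_Rk_nonneg[OF N unit_Rk] by (auto intro: sum_nonneg)
  then show "0 < 1 / (1 + ?S)"
    by simp
  fix j assume "j < k"
  have "N (\<lambda>i. 1 / (1 + ?S) * unitvec j i) = N (unitvec j) / (1 + ?S)"
    using is_norm_on_Rk_scale[OF N unit_Rk[OF \<open>j < k\<close>], of "1 / (1 + ?S)"] S by simp
  also have "\<dots> \<le> 1"
  proof -
    have "N (unitvec j) \<le> ?S"
      using \<open>j < k\<close> is_norm_on_Rk_nonneg[OF N unit_Rk] by (intro member_le_sum) auto
    then show ?thesis
      using S by simp
  qed
  finally show "(\<lambda>i. 1 / (1 + ?S) * unitvec j i) \<in> unit_ball_Rk k N"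
    using \<open>j < k\<close> by (auto simp: unit_ball_Rk_def unitvec_def Rk_def)
qed

text \<open>Auerbach's lemma, in the form needed for packing: columns of maximal determinant
  taken from a finite subset of the unit ball express every point of it with coefficients
  bounded by 1, by Cramer's rule.\<close>
lemma unit_ball_Auerbach_coordinates:
  assumes N: "is_norm_on_Rk k N" and S: "finite S" "S \<subseteq> unit_ball_Rk k N"
  obtains t :: "nat \<Rightarrow> nat \<Rightarrow> real" and c :: "(nat \<Rightarrow> real) \<Rightarrow> nat \<Rightarrow> real"
  where "\<And>j. j < k \<Longrightarrow> t j \<in> unit_ball_Rk k N"
    and "\<And>s j. s \<in> S \<Longrightarrow> j < k \<Longrightarrow> \<bar>c s j\<bar> \<le> 1"
    and "\<And>s. s \<in> S \<Longrightarrow> s = (\<lambda>i. \<Sum>j<k. c s j * t j i)"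
proof -
  obtain \<epsilon> where \<epsilon>: "0 < \<epsilon>" and E: "\<And>j. j < k \<Longrightarrow> (\<lambda>i. \<epsilon> * unitvec j i) \<in> unit_ball_Rk k N"
    using obtain_scaled_unitvecs_in_unit_ball[OF N] by blast
  define V where "V = S \<union> (\<lambda>j i. \<epsilon> * unitvec j i) ` {..<k}"
  have "col_mat k (\<lambda>j\<in>{..<k}. \<lambda>i. \<epsilon> * unitvec j i) = \<epsilon> \<cdot>\<^sub>m 1\<^sub>m k"
    by (rule eq_matI) (auto simp: col_mat_def unitvec_def)
  then obtain t where t: "t \<in> PiE {..<k} (\<lambda>_. V)" and det_t: "det (col_mat k t) \<noteq> 0"
    and t_max: "\<And>t'. t' \<in> PiE {..<k} (\<lambda>_. V) \<Longrightarrow> \<bar>det (col_mat k t')\<bar> \<le> \<bar>det (col_mat k t)\<bar>"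
    using obtain_max_det_columns[of V "\<lambda>j\<in>{..<k}. \<lambda>i. \<epsilon> * unitvec j i" k] S(1) \<epsilon>
    by (auto simp: V_def)
  have t_ball: "t j \<in> unit_ball_Rk k N" if "j < k" for j
    using t that S(2) E by (auto simp: V_def)
  have "\<exists>x. s = (\<lambda>i. \<Sum>j<k. x j * t j i) \<and> (\<forall>j<k. \<bar>x j\<bar> \<le> 1)" if s: "s \<in> S" for s
  proof -
    obtain x where repr: "s = (\<lambda>i. \<Sum>j<k. x j * t j i)"
      and cramer: "\<And>j. j < k \<Longrightarrow> x j * det (col_mat k t) = det (col_mat k (t(j := s)))"
      using col_mat_coordinates[OF det_t, of s] s S(2) t_ball by (auto simp: unit_ball_Rk_def)
    have "\<bar>x j\<bar> \<le> 1" if "j < k" for j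
    proof -
      have "t(j := s) \<in> PiE {..<k} (\<lambda>_. V)"
        using t s that by (auto simp: V_def PiE_iff extensional_def)
      then have "\<bar>x j * det (col_mat k t)\<bar> \<le> \<bar>det (col_mat k t)\<bar>"
        using t_max cramer[OF that] by simp
      then show ?thesis
        using det_t by (simp add: abs_mult)
    qed
    with repr show ?thesis
      by blast
  qed
  then obtain c where "\<And>s. s \<in> S \<Longrightarrow> s = (\<lambda>i. \<Sum>j<k. c s j * t j i) \<and> (\<forall>j<k. \<bar>c s j\<bar> \<le> 1)"
    by metis
  with t_ball show thesis
    using that by blast
qed

lemma dist_less_if_floor_divide_eq:
  fixes a b r :: real
  assumes "0 < r" and "\<lfloor>a / r\<rfloor> = \<lfloor>b / r\<rfloor>"
  shows "\<bar>a - b\<bar> < r"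
proof -
  have "\<bar>a / r - b / r\<bar> < 1"
    using floor_correct[of "a / r"] floor_correct[of "b / r"] assms(2) by (simp add: abs_less_iff) linarith
  then show ?thesis
    using assms(1) by (simp add: diff_divide_distrib[symmetric] abs_divide)
qed

text \<open>Rounding the Auerbach coordinates to the grid of mesh \<rho>/k is injective on a
  \<rho>-separated set.\<close>
lemma card_separated_unit_ball_le:
  assumes N: "is_norm_on_Rk k N" and k: "1 \<le> k" and S: "finite S" "S \<subseteq> unit_ball_Rk k N"
    and \<rho>: "0 < \<rho>"
    and sep: "\<And>s s'. s \<in> S \<Longrightarrow> s' \<in> S \<Longrightarrow> s \<noteq> s' \<Longrightarrow> \<rho> \<le> N (\<lambda>i. s i - s' i)"
  shows "real (card S) \<le> (2 * real k / \<rho> + 1) ^ k"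
proof -
  obtain t c where t: "\<And>j. j < k \<Longrightarrow> t j \<in> unit_ball_Rk k N"
    and c: "\<And>s j. s \<in> S \<Longrightarrow> j < k \<Longrightarrow> \<bar>c s j\<bar> \<le> 1"
    and repr: "\<And>s. s \<in> S \<Longrightarrow> s = (\<lambda>i. \<Sum>j<k. c s j * t j i)"
    using unit_ball_Auerbach_coordinates[OF N S] by blast
  have dist_le: "N (\<lambda>i. s i - s' i) \<le> (\<Sum>j<k. \<bar>c s j - c s' j\<bar>)" if "s \<in> S" "s' \<in> S" for s s'
  proof -
    have "s i - s' i = (\<Sum>j<k. (c s j - c s' j) * t j i)" for i
      using fun_cong[OF repr[OF that(1)], of i] fun_cong[OF repr[OF that(2)], of i]
      by (simp add: sum_subtractf left_diff_distrib)
    then have "N (\<lambda>i. s i - s' i) \<le> (\<Sum>j<k. \<bar>c s j - c s' j\<bar> * N (t j))"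
      using is_norm_on_Rk_sum_le[OF N, of "{..<k}" t] t by (simp add: unit_ball_Rk_def)
    also have "\<dots> \<le> (\<Sum>j<k. \<bar>c s j - c s' j\<bar>)"
      using t by (intro sum_mono) (simp add: mult_left_le unit_ball_Rk_def)
    finally show ?thesis .
  qed
  define \<eta> where "\<eta> = \<rho> / real k"
  have \<eta>: "0 < \<eta>"
    using \<rho> k by (simp add: \<eta>_def)
  define G where "G = nat \<lfloor>2 / \<eta>\<rfloor>"
  define cell where "cell s = (\<lambda>j\<in>{..<k}. nat \<lfloor>(c s j + 1) / \<eta>\<rfloor>)" for s
  have "nat \<lfloor>(c s j + 1) / \<eta>\<rfloor> \<le> G" if "s \<in> S" "j < k" for s j
    using c[OF that] \<eta> unfolding G_def by (intro nat_mono floor_mono divide_right_mono) auto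
  then have "cell ` S \<subseteq> PiE {..<k} (\<lambda>_. {0..G})"
    unfolding cell_def by (intro image_subsetI) (simp add: restrict_PiE_iff)
  moreover have "inj_on cell S"
  proof (rule inj_onI, rule ccontr)
    fix s s' assume s: "s \<in> S" and s': "s' \<in> S" and eq: "cell s = cell s'" and "s \<noteq> s'"
    have "\<bar>c s j - c s' j\<bar> < \<eta>" if j: "j < k" for j
    proof -
      have "0 \<le> (c s j + 1) / \<eta>" "0 \<le> (c s' j + 1) / \<eta>"
        using c[OF s j] c[OF s' j] \<eta> by auto
      with fun_cong[OF eq, of j] j have "\<lfloor>(c s j + 1) / \<eta>\<rfloor> = \<lfloor>(c s' j + 1) / \<eta>\<rfloor>"
        by (simp add: cell_def nat_eq_iff2)
      then show ?thesis
        using dist_less_if_floor_divide_eq[OF \<eta>] by fastforce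
    qed
    then have "(\<Sum>j<k. \<bar>c s j - c s' j\<bar>) < (\<Sum>j<k. \<eta>)"
      using k by (intro sum_strict_mono) (auto simp: lessThan_empty_iff)
    with dist_le[OF s s'] k have "N (\<lambda>i. s i - s' i) < \<rho>"
      by (simp add: \<eta>_def)
    with sep[OF s s' \<open>s \<noteq> s'\<close>] show False
      by simp
  qed
  ultimately have "card S \<le> card (PiE {..<k} (\<lambda>_. {0..G}))"
    by (intro card_inj_on_le) (auto simp: finite_PiE)
  then have "card S \<le> (G + 1) ^ k"
    by (simp add: card_PiE)
  then have "real (card S) \<le> real (G + 1) ^ k"
    by (metis of_nat_le_iff of_nat_power)
  also have "\<dots> \<le> (2 * real k / \<rho> + 1) ^ k"
    using \<rho> by (intro power_mono) (auto simp: G_def \<eta>_def)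
  finally show ?thesis .
qed

section \<open>Approximation by Lipschitz images of unit balls\<close>

lemma zero_in_unit_ball_Rk: "is_norm_on_Rk k N \<Longrightarrow> (\<lambda>i. 0) \<in> unit_ball_Rk k N"
  by (simp add: unit_ball_Rk_def Rk_def is_norm_on_Rk_zero)

lemma lip_maps_in_c0: "\<Phi> \<in> lip_maps \<gamma> k N \<Longrightarrow> y \<in> unit_ball_Rk k N \<Longrightarrow> \<Phi> y \<in> c0"
  by (simp add: lip_maps_def)

lemma lip_maps_dist_le:
  "\<Phi> \<in> lip_maps \<gamma> k N \<Longrightarrow> y \<in> unit_ball_Rk k N \<Longrightarrow> y' \<in> unit_ball_Rk k N \<Longrightarrow>
    c0norm (\<lambda>i. \<Phi> y i - \<Phi> y' i) \<le> \<gamma> * N (\<lambda>i. y i - y' i)"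
  by (simp add: lip_maps_def)

lemma zero_in_lip_maps:
  assumes N: "is_norm_on_Rk k N" and "0 \<le> \<gamma>"
  shows "(\<lambda>y i. 0) \<in> lip_maps \<gamma> k N"
  using assms is_norm_on_Rk_nonneg[OF N Rk_diff]
  by (auto simp: lip_maps_def unit_ball_Rk_def intro: c0_if_eventually_zero)

abbreviation approx_error ::
  "nat \<Rightarrow> ((nat \<Rightarrow> real) \<Rightarrow> real) \<Rightarrow> ((nat \<Rightarrow> real) \<Rightarrow> (nat \<Rightarrow> real)) \<Rightarrow> (nat \<Rightarrow> real) \<Rightarrow> real"
  where "approx_error k N \<Phi> f \<equiv> INF y\<in>unit_ball_Rk k N. c0norm (\<lambda>i. f i - \<Phi> y i)"

context
  fixes k N \<gamma> \<Phi> and f :: "nat \<Rightarrow> real"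
  assumes N: "is_norm_on_Rk k N" and \<Phi>: "\<Phi> \<in> lip_maps \<gamma> k N" and f: "Bseq f"
begin

lemma approx_error_Bseq: "y \<in> unit_ball_Rk k N \<Longrightarrow> Bseq (\<lambda>i. f i - \<Phi> y i)"
  using f lip_maps_in_c0[OF \<Phi>] by (blast intro: Bseq_diff c0_imp_Bseq)

lemma bdd_below_approx_errors: "bdd_below ((\<lambda>y. c0norm (\<lambda>i. f i - \<Phi> y i)) ` unit_ball_Rk k N)"
  by (rule bdd_belowI2[of _ 0]) (simp add: c0norm_nonneg approx_error_Bseq)

lemma approx_error_le: "y \<in> unit_ball_Rk k N \<Longrightarrow> approx_error k N \<Phi> f \<le> c0norm (\<lambda>i. f i - \<Phi> y i)"
  by (rule cINF_lower[OF bdd_below_approx_errors])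

lemma approx_error_nonneg: "0 \<le> approx_error k N \<Phi> f"
  using zero_in_unit_ball_Rk[OF N]
  by (intro cINF_greatest) (auto simp: c0norm_nonneg approx_error_Bseq)

lemma approx_error_lessE:
  assumes "approx_error k N \<Phi> f < \<delta>"
  obtains y where "y \<in> unit_ball_Rk k N" and "c0norm (\<lambda>i. f i - \<Phi> y i) < \<delta>"
  using cInf_lessD[OF _ assms] zero_in_unit_ball_Rk[OF N] by blast

end

lemma bdd_above_approx_error:
  assumes N: "is_norm_on_Rk k N" and \<Phi>: "\<Phi> \<in> lip_maps \<gamma> k N"
    and K: "\<forall>f\<in>K. \<forall>i. \<bar>f i\<bar> \<le> B"
  shows "bdd_above (approx_error k N \<Phi> ` K)"
proof -
  note zero = zero_in_unit_ball_Rk[OF N]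
  obtain C where C: "\<And>i. \<bar>\<Phi> (\<lambda>i. 0) i\<bar> \<le> C"
    using c0_imp_Bseq[OF lip_maps_in_c0[OF \<Phi> zero]] by (metis BseqE real_norm_def)
  have "approx_error k N \<Phi> f \<le> B + C" if "f \<in> K" for f
  proof -
    have "approx_error k N \<Phi> f \<le> c0norm (\<lambda>i. f i - \<Phi> (\<lambda>i. 0) i)"
      using approx_error_le[OF N \<Phi> bounded_imp_Bseq[OF K[rule_format]] zero] that .
    also have "\<dots> \<le> B + C"
      using K that C by (intro c0norm_least) (smt (verit) abs_triangle_ineq4)
    finally show ?thesis .
  qed
  then show ?thesis
    by (intro bdd_aboveI2)
qed

lemma SUP_approx_error_nonneg:
  assumes N: "is_norm_on_Rk k N" and \<Phi>: "\<Phi> \<in> lip_maps \<gamma> k N"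
    and K: "\<forall>f\<in>K. \<forall>i. \<bar>f i\<bar> \<le> B" and "f \<in> K"
  shows "0 \<le> (SUP f\<in>K. approx_error k N \<Phi> f)"
proof -
  have "Bseq f"
    using K \<open>f \<in> K\<close> by (intro bounded_imp_Bseq[of f B]) blast
  then show ?thesis
    using approx_error_nonneg[OF N \<Phi>] cSUP_upper[OF \<open>f \<in> K\<close> bdd_above_approx_error[OF N \<Phi> K]]
    by (meson order_trans)
qed

lemma lip_width_fixed_nonneg:
  assumes K: "\<forall>f\<in>K. \<forall>i. \<bar>f i\<bar> \<le> B" "K \<noteq> {}"
    and N: "is_norm_on_Rk k N" and "0 \<le> \<gamma>"
  shows "0 \<le> lip_width_fixed \<gamma> K k N"
  unfolding lip_width_fixed_def
  using zero_in_lip_maps[OF N \<open>0 \<le> \<gamma>\<close>] SUP_approx_error_nonneg[OF N _ K(1)] K(2)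
  by (intro cINF_greatest) auto

lemma lip_width_le:
  assumes K: "\<forall>f\<in>K. \<forall>i. \<bar>f i\<bar> \<le> B" "K \<noteq> {}" and "0 \<le> \<gamma>"
    and k: "1 \<le> k" "k \<le> n" and N: "is_norm_on_Rk k N" and \<Phi>: "\<Phi> \<in> lip_maps \<gamma> k N"
    and cover: "\<And>f. f \<in> K \<Longrightarrow> \<exists>y\<in>unit_ball_Rk k N. c0norm (\<lambda>i. f i - \<Phi> y i) \<le> E"
  shows "lip_width \<gamma> K n \<le> E"
proof -
  have "lip_width \<gamma> K n \<le> lip_width_fixed \<gamma> K k N"
    unfolding lip_width_def using k N lip_width_fixed_nonneg[OF K _ \<open>0 \<le> \<gamma>\<close>]
    by (intro cInf_lower) (auto intro!: bdd_belowI[of _ 0])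
  also have "\<dots> \<le> (SUP f\<in>K. approx_error k N \<Phi> f)"
    unfolding lip_width_fixed_def using SUP_approx_error_nonneg[OF N _ K(1)] K(2)
    by (intro cINF_lower[OF _ \<Phi>]) (auto intro!: bdd_belowI[of _ 0])
  also have "\<dots> \<le> E"
  proof (rule cSUP_least[OF K(2)])
    fix f assume "f \<in> K"
    then obtain y where "y \<in> unit_ball_Rk k N" "c0norm (\<lambda>i. f i - \<Phi> y i) \<le> E"
      using cover by blast
    then show "approx_error k N \<Phi> f \<le> E"
      using approx_error_le[OF N \<Phi> bounded_imp_Bseq[of f B]] K(1) \<open>f \<in> K\<close> by fastforce
  qed
  finally show ?thesis .
qed

lemma lip_width_ge:
  assumes "1 \<le> n" and "0 \<le> \<gamma>"
    and bound: "\<And>k N \<Phi>. 1 \<le> k \<Longrightarrow> k \<le> n \<Longrightarrow> is_norm_on_Rk k N \<Longrightarrow> \<Phi> \<in> lip_maps \<gamma> k N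
      \<Longrightarrow> \<delta> \<le> (SUP f\<in>K. approx_error k N \<Phi> f)"
  shows "\<delta> \<le> lip_width \<gamma> K n"
  unfolding lip_width_def lip_width_fixed_def
proof (rule cInf_greatest)
  show "{INF \<Phi>\<in>lip_maps \<gamma> k N. SUP f\<in>K. approx_error k N \<Phi> f |k N.
      1 \<le> k \<and> k \<le> n \<and> is_norm_on_Rk k N} \<noteq> {}"
    using \<open>1 \<le> n\<close> c0norm_is_norm_on_Rk by blast
next
  fix x assume "x \<in> {INF \<Phi>\<in>lip_maps \<gamma> k N. SUP f\<in>K. approx_error k N \<Phi> f |k N.
      1 \<le> k \<and> k \<le> n \<and> is_norm_on_Rk k N}"
  then obtain k N where x: "x = (INF \<Phi>\<in>lip_maps \<gamma> k N. SUP f\<in>K. approx_error k N \<Phi> f)"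
    and k: "1 \<le> k" "k \<le> n" and N: "is_norm_on_Rk k N"
    by blast
  show "\<delta> \<le> x"
    unfolding x using zero_in_lip_maps[OF N \<open>0 \<le> \<gamma>\<close>] bound[OF k N]
    by (intro cINF_greatest) auto
qed

lemma lip_maps_preimages_separated:
  assumes \<Phi>: "\<Phi> \<in> lip_maps \<gamma> k N" and y: "y \<in> unit_ball_Rk k N" "y' \<in> unit_ball_Rk k N"
    and "Bseq s" "Bseq s'"
    and close: "c0norm (\<lambda>i. s i - \<Phi> y i) < \<delta>" "c0norm (\<lambda>i. s' i - \<Phi> y' i) < \<delta>"
    and sep: "3 * \<delta> \<le> c0norm (\<lambda>i. s i - s' i)"
  shows "\<delta> < \<gamma> * N (\<lambda>i. y i - y' i)"
proof -
  have "Bseq (\<Phi> y)" "Bseq (\<Phi> y')"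
    using lip_maps_in_c0[OF \<Phi>] y by (auto intro: c0_imp_Bseq)
  then have "c0norm (\<lambda>i. s i - s' i) \<le> c0norm (\<lambda>i. s i - \<Phi> y i)
      + c0norm (\<lambda>i. \<Phi> y i - \<Phi> y' i) + c0norm (\<lambda>i. \<Phi> y' i - s' i)"
    using c0norm_triangle_diff[of s "\<Phi> y" s'] c0norm_triangle_diff[of "\<Phi> y" "\<Phi> y'" s']
      \<open>Bseq s\<close> \<open>Bseq s'\<close> by simp
  then show ?thesis
    using sep close lip_maps_dist_le[OF \<Phi> y] c0norm_minus_commute[of "\<Phi> y'" s'] by simp
qed

text \<open>If every point of a 3\<delta>-separated set S were \<delta>-close to the image of a
  \<gamma>-Lipschitz map, the preimages would form a (\<delta>/\<gamma>)-separated set of card S points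
  in the unit ball.\<close>
lemma SUP_approx_error_ge_if_separated:
  assumes K: "\<forall>f\<in>K. \<forall>i. \<bar>f i\<bar> \<le> B" and N: "is_norm_on_Rk k N" and k: "1 \<le> k"
    and \<Phi>: "\<Phi> \<in> lip_maps \<gamma> k N" and \<gamma>: "0 < \<gamma>" and \<delta>: "0 < \<delta>"
    and S: "S \<subseteq> K" "finite S"
    and sep: "\<And>s s'. s \<in> S \<Longrightarrow> s' \<in> S \<Longrightarrow> s \<noteq> s' \<Longrightarrow> 3 * \<delta> \<le> c0norm (\<lambda>i. s i - s' i)"
    and many: "(2 * real k * \<gamma> / \<delta> + 1) ^ k < real (card S)"
  shows "\<delta> \<le> (SUP f\<in>K. approx_error k N \<Phi> f)"
proof (rule ccontr)
  assume small: "\<not> ?thesis"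
  have BS: "Bseq s" if "s \<in> S" for s
    using K S(1) that by (intro bounded_imp_Bseq[of s B]) blast
  have "\<forall>s\<in>S. \<exists>y\<in>unit_ball_Rk k N. c0norm (\<lambda>i. s i - \<Phi> y i) < \<delta>"
  proof
    fix s assume "s \<in> S"
    then have "approx_error k N \<Phi> s < \<delta>"
      using small S(1) cSUP_upper[OF _ bdd_above_approx_error[OF N \<Phi> K]] by fastforce
    then show "\<exists>y\<in>unit_ball_Rk k N. c0norm (\<lambda>i. s i - \<Phi> y i) < \<delta>"
      using approx_error_lessE[OF N \<Phi> BS[OF \<open>s \<in> S\<close>]] by blast
  qed
  then obtain y where y: "\<And>s. s \<in> S \<Longrightarrow> y s \<in> unit_ball_Rk k N"
    and close: "\<And>s. s \<in> S \<Longrightarrow> c0norm (\<lambda>i. s i - \<Phi> (y s) i) < \<delta>"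
    by metis
  have y_sep: "\<delta> / \<gamma> < N (\<lambda>i. y s i - y s' i)" if "s \<in> S" "s' \<in> S" "s \<noteq> s'" for s s'
    using lip_maps_preimages_separated[OF \<Phi> y[OF that(1)] y[OF that(2)] BS[OF that(1)]
        BS[OF that(2)] close[OF that(1)] close[OF that(2)] sep[OF that]] \<gamma>
    by (simp add: field_simps)
  have "inj_on y S"
  proof (rule inj_onI, rule ccontr)
    fix s s' assume "s \<in> S" "s' \<in> S" "y s = y s'" "s \<noteq> s'"
    then have "\<delta> / \<gamma> < 0"
      using y_sep[of s s'] is_norm_on_Rk_zero[OF N] by simp
    with \<gamma> \<delta> show False
      by (simp add: divide_less_0_iff)
  qed
  then have "real (card S) = real (card (y ` S))"
    by (simp add: card_image)
  also have "\<dots> \<le> (2 * real k / (\<delta> / \<gamma>) + 1) ^ k"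
    using y y_sep \<gamma> \<delta> S(2) by (intro card_separated_unit_ball_le[OF N k]) (auto intro: less_imp_le)
  finally show False
    using many \<gamma> by (simp add: field_simps)
qed

section \<open>The set K(sigma) and its inner entropy numbers\<close>

lemma sigma_pos: "1 \<le> j \<Longrightarrow> 0 < sigma j"
  by (simp add: sigma_def)

lemma sigma_le_one: "1 \<le> j \<Longrightarrow> sigma j \<le> 1"
  using log_mono[of 2 2 "real j + 1"] by (simp add: sigma_def)

lemma sigma_antimono: "1 \<le> j \<Longrightarrow> j \<le> j' \<Longrightarrow> sigma j' \<le> sigma j"
  unfolding sigma_def by (intro divide_left_mono log_mono) auto

lemma sigma_le_inverse:
  assumes "0 < a" and "2 ^ a \<le> j + 1"
  shows "sigma j \<le> 1 / real a"
proof -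
  have "real (2 ^ a) \<le> real (j + 1)"
    using assms(2) by (simp only: of_nat_le_iff)
  then have "log 2 (2 ^ a) \<le> log 2 (real j + 1)"
    by (intro log_mono) auto
  then have "real a \<le> log 2 (real j + 1)"
    by (simp add: log_pow_cancel)
  moreover have "0 < real a"
    using assms(1) by simp
  ultimately show ?thesis
    unfolding sigma_def by (intro divide_left_mono mult_pos_pos; linarith)
qed

lemma inverse_le_sigma:
  assumes "1 \<le> j" and "log 2 (real j + 1) \<le> a"
  shows "1 / a \<le> sigma j"
proof -
  have "0 < log 2 (real j + 1)"
    using assms(1) by simp
  with assms(2) show ?thesis
    unfolding sigma_def by (intro divide_left_mono mult_pos_pos; linarith)
qed

definition spike :: "nat \<Rightarrow> nat \<Rightarrow> real" where
  "spike k = (\<lambda>i. sigma (k + 1) * unitvec k i)"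

lemma spike_apply: "spike k i = (if i = k then sigma (k + 1) else 0)"
  by (simp add: spike_def unitvec_def)

lemma Ksigma_eq: "Ksigma = insert (\<lambda>i. 0) (range spike)"
  by (auto simp: Ksigma_def spike_def)

lemma spike_bounded: "\<bar>spike k i\<bar> \<le> 1"
  using sigma_le_one[of "k + 1"] sigma_pos[of "k + 1"] by (simp add: spike_apply)

lemma Ksigma_bounded: "\<forall>f\<in>Ksigma. \<forall>i. \<bar>f i\<bar> \<le> 1"
  by (auto simp: Ksigma_eq spike_bounded)

lemma inj_spike: "inj spike"
proof (rule injI)
  fix k l assume "spike k = spike l"
  then have "spike k k = spike l k"
    by simp
  then show "k = l"
    using sigma_pos[of "k + 1"] by (simp add: spike_apply split: if_splits)
qed

lemma spike_dist_ge:
  assumes "Bseq c"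
  shows "\<bar>sigma (k + 1) - c k\<bar> \<le> c0norm (\<lambda>i. spike k i - c i)"
  using c0norm_upper[OF Bseq_diff[OF bounded_imp_Bseq[of "spike k" 1, OF spike_bounded] assms], where j=k]
  by (simp add: spike_apply)

abbreviation is_inner_cover :: "(nat \<Rightarrow> real) set \<Rightarrow> nat \<Rightarrow> real \<Rightarrow> bool" where
  "is_inner_cover K n \<epsilon> \<equiv> \<exists>C. C \<subseteq> K \<and> finite C \<and> card C \<le> 2 ^ n \<and>
     (\<forall>f\<in>K. \<exists>c\<in>C. c0norm (\<lambda>i. f i - c i) \<le> \<epsilon>)"

lemma inner_entropy_le: "0 < \<epsilon> \<Longrightarrow> is_inner_cover K n \<epsilon> \<Longrightarrow> inner_entropy K n \<le> \<epsilon>"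
  unfolding inner_entropy_def by (rule cInf_lower) (auto intro: bdd_belowI[of _ 0])

lemma inner_entropy_ge:
  assumes "0 < \<epsilon>\<^sub>0" and "is_inner_cover K n \<epsilon>\<^sub>0"
    and "\<And>\<epsilon>. 0 < \<epsilon> \<Longrightarrow> is_inner_cover K n \<epsilon> \<Longrightarrow> \<delta> \<le> \<epsilon>"
  shows "\<delta> \<le> inner_entropy K n"
  unfolding inner_entropy_def using assms by (intro cInf_greatest) auto

text \<open>The spikes of index at least 2^n - 1 are within 1/n of the centre 0.\<close>
lemma Ksigma_inner_cover:
  assumes "1 \<le> n"
  shows "is_inner_cover Ksigma n (1 / real n)"
proof (intro exI conjI)
  let ?C = "insert (\<lambda>i. 0) (spike ` {..<2 ^ n - 1})"
  show "?C \<subseteq> Ksigma" "finite ?C"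
    by (auto simp: Ksigma_eq)
  have "card ?C \<le> Suc (card (spike ` {..<2 ^ n - 1}))"
    by (simp add: card_insert_if)
  moreover have "card (spike ` {..<2 ^ n - 1}) \<le> 2 ^ n - 1"
    using card_image_le[of "{..<2 ^ n - 1}" spike] by simp
  moreover have "0 < (2::nat) ^ n"
    by simp
  ultimately show "card ?C \<le> 2 ^ n"
    by linarith
  show "\<forall>f\<in>Ksigma. \<exists>c\<in>?C. c0norm (\<lambda>i. f i - c i) \<le> 1 / real n"
  proof
    fix f assume "f \<in> Ksigma"
    then consider "f = (\<lambda>i. 0)" | k where "f = spike k" "k < 2 ^ n - 1"
      | k where "f = spike k" "2 ^ n \<le> k + 2"
      unfolding Ksigma_eq by fastforce
    then show "\<exists>c\<in>?C. c0norm (\<lambda>i. f i - c i) \<le> 1 / real n"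
    proof cases
      case 1
      then show ?thesis
        by (intro bexI[of _ "\<lambda>i. 0"]) auto
    next
      case (2 k)
      then show ?thesis
        by (intro bexI[of _ "spike k"]) auto
    next
      case (3 k)
      have "sigma (k + 1) \<le> 1 / real n"
        using 3 assms by (intro sigma_le_inverse) auto
      then have "c0norm (\<lambda>i. f i - 0) \<le> 1 / real n"
        using 3 sigma_pos[of "k + 1"] by (intro c0norm_least) (simp add: spike_apply)
      then show ?thesis
        by (intro bexI[of _ "\<lambda>i. 0"]) auto
    qed
  qed
qed

text \<open>Below radius sigma(2^n) each of the first 2^n spikes needs itself as centre, and 0
  needs yet another one.\<close>
lemma Ksigma_inner_cover_radius_ge:
  assumes "is_inner_cover Ksigma n \<epsilon>"
  shows "sigma (2 ^ n) \<le> \<epsilon>"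
proof (rule ccontr)
  assume "\<not> ?thesis"
  then have small: "\<epsilon> < sigma (k + 1)" if "k < 2 ^ n" for k
    using sigma_antimono[of "k + 1" "2 ^ n"] that by simp
  from assms obtain C where C: "C \<subseteq> Ksigma" "finite C" "card C \<le> 2 ^ n"
    and cover: "\<forall>f\<in>Ksigma. \<exists>c\<in>C. c0norm (\<lambda>i. f i - c i) \<le> \<epsilon>"
    by blast
  have BC: "Bseq c" if "c \<in> C" for c
    using that C(1) Ksigma_bounded by (intro bounded_imp_Bseq[of c 1]) blast
  have "spike k \<in> C" if k: "k < 2 ^ n" for k
  proof -
    obtain c where c: "c \<in> C" "c0norm (\<lambda>i. spike k i - c i) \<le> \<epsilon>"
      using cover by (auto simp: Ksigma_eq)
    then have "c k \<noteq> 0"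
      using spike_dist_ge[OF BC, of c k] small[OF k] by auto
    with c C(1) show ?thesis
      by (auto simp: Ksigma_eq spike_apply split: if_splits)
  qed
  moreover obtain c\<^sub>0 where c\<^sub>0: "c\<^sub>0 \<in> C" "c0norm (\<lambda>i. 0 - c\<^sub>0 i) \<le> \<epsilon>"
    using cover by (auto simp: Ksigma_eq)
  moreover have "c\<^sub>0 \<notin> spike ` {..<2 ^ n}"
  proof
    assume "c\<^sub>0 \<in> spike ` {..<2 ^ n}"
    then obtain k where k: "k < 2 ^ n" "c\<^sub>0 = spike k"
      by blast
    then have "sigma (k + 1) \<le> \<epsilon>"
      using c\<^sub>0(2) spike_dist_ge[of "\<lambda>i. 0" k] c0norm_minus_commute[of "\<lambda>i. 0" c\<^sub>0] by simp
    with small[OF k(1)] show False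
      by simp
  qed
  ultimately have "card (insert c\<^sub>0 (spike ` {..<2 ^ n})) \<le> card C"
    using C(2) by (intro card_mono) auto
  moreover have "card (insert c\<^sub>0 (spike ` {..<2 ^ n})) = 2 ^ n + 1"
    using \<open>c\<^sub>0 \<notin> spike ` {..<2 ^ n}\<close> inj_spike by (simp add: card_image inj_on_subset)
  ultimately show False
    using C(3) by simp
qed

lemma inner_entropy_Ksigma_le: "1 \<le> n \<Longrightarrow> inner_entropy Ksigma n \<le> 1 / real n"
  using inner_entropy_le Ksigma_inner_cover by simp

lemma inner_entropy_Ksigma_ge:
  assumes "1 \<le> n"
  shows "1 / (2 * real n) \<le> inner_entropy Ksigma n"
proof (rule inner_entropy_ge[OF _ Ksigma_inner_cover[OF assms]])
  have "log 2 (real (2 ^ n) + 1) \<le> log 2 (2 ^ (n + 1))"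
    by (intro log_mono) (simp_all add: add_pos_nonneg)
  also have "\<dots> = real n + 1"
    by (subst log_pow_cancel) auto
  also have "\<dots> \<le> 2 * real n"
    using assms by simp
  finally show "1 / (2 * real n) \<le> \<epsilon>" if "is_inner_cover Ksigma n \<epsilon>" for \<epsilon>
    using inverse_le_sigma[of "2 ^ n"] Ksigma_inner_cover_radius_ge[OF that] by fastforce
qed (use assms in auto)

section \<open>Upper bound for the Lipschitz widths\<close>

definition tent_map ::
  "nat \<Rightarrow> (nat \<Rightarrow> real) \<Rightarrow> (nat \<Rightarrow> nat \<Rightarrow> real) \<Rightarrow> (nat \<Rightarrow> real) \<Rightarrow> nat \<Rightarrow> real" where
  "tent_map P h p y = (\<lambda>i. if i < P then max 0 (h i - 2 * c0norm (\<lambda>j. y j - p i j)) else 0)"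

lemma tent_map_in_lip_maps:
  assumes p: "\<And>i. i < P \<Longrightarrow> p i \<in> Rk k" and "2 \<le> \<gamma>"
  shows "tent_map P h p \<in> lip_maps \<gamma> k c0norm"
  unfolding lip_maps_def
proof (intro CollectI conjI ballI)
  fix y
  show "tent_map P h p y \<in> c0"
    by (rule c0_if_eventually_zero[of P]) (simp add: tent_map_def)
next
  fix y y' assume "y \<in> unit_ball_Rk k c0norm" "y' \<in> unit_ball_Rk k c0norm"
  then have y: "Bseq y" "Bseq y'" and yy': "Bseq (\<lambda>j. y j - y' j)"
    by (auto simp: unit_ball_Rk_def Rk_imp_Bseq intro: unit_ball_Rk_diff_Bseq)
  have "\<bar>tent_map P h p y i - tent_map P h p y' i\<bar> \<le> 2 * c0norm (\<lambda>j. y j - y' j)" for i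
  proof (cases "i < P")
    case True
    have "\<bar>c0norm (\<lambda>j. y j - p i j) - c0norm (\<lambda>j. y' j - p i j)\<bar> \<le> c0norm (\<lambda>j. y j - y' j)"
      using y Rk_imp_Bseq[OF p[OF True]] by (rule c0norm_reverse_triangle)
    with True show ?thesis
      by (simp add: tent_map_def max_def abs_le_iff)
  qed (simp add: tent_map_def c0norm_nonneg[OF yy'])
  then have "c0norm (\<lambda>i. tent_map P h p y i - tent_map P h p y' i) \<le> 2 * c0norm (\<lambda>j. y j - y' j)"
    by (rule c0norm_least)
  also have "\<dots> \<le> \<gamma> * c0norm (\<lambda>j. y j - y' j)"
    using \<open>2 \<le> \<gamma>\<close> c0norm_nonneg[OF yy'] by (intro mult_right_mono) auto
  finally show "c0norm (\<lambda>i. tent_map P h p y i - tent_map P h p y' i) \<le> \<gamma> * c0norm (\<lambda>i. y i - y' i)" .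
qed

lemma tent_map_at_center:
  assumes "i < P" and "0 \<le> h i"
    and "\<And>l. l < P \<Longrightarrow> l \<noteq> i \<Longrightarrow> h l \<le> 2 * c0norm (\<lambda>j. p i j - p l j)"
  shows "tent_map P h p (p i) = (\<lambda>l. if l = i then h i else 0)"
  using assms by (auto simp: tent_map_def fun_eq_iff)

lemma tent_map_at_zero:
  assumes "\<And>i. i < P \<Longrightarrow> h i \<le> 2 * c0norm (p i)"
  shows "tent_map P h p (\<lambda>j. 0) = (\<lambda>i. 0)"
  using assms c0norm_minus_commute[of "\<lambda>j. 0"] by (simp add: tent_map_def fun_eq_iff)

definition digit :: "nat \<Rightarrow> nat \<Rightarrow> nat \<Rightarrow> nat" where
  "digit b t i = i div b ^ t mod b"

lemma digit_less: "0 < b \<Longrightarrow> digit b t i < b"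
  by (simp add: digit_def)

lemma digits_differ:
  assumes "i < b ^ K" and "i' < b ^ K" and "i \<noteq> i'"
  shows "\<exists>t<K. digit b t i \<noteq> digit b t i'"
  using assms
proof (induction K arbitrary: i i')
  case (Suc K)
  show ?case
  proof (cases "i mod b = i' mod b")
    case True
    then have "i div b \<noteq> i' div b"
      using Suc.prems(3) by (metis div_mult_mod_eq)
    moreover have "i div b < b ^ K" "i' div b < b ^ K"
      using Suc.prems by (auto intro: less_mult_imp_div_less simp: mult.commute)
    ultimately obtain t where "t < K" "digit b t (i div b) \<noteq> digit b t (i' div b)"
      using Suc.IH by blast
    then show ?thesis
      by (intro exI[of _ "Suc t"]) (simp add: digit_def div_mult2_eq)
  qed (auto simp: digit_def intro: exI[of _ 0])
qed simp

text \<open>Coordinate 0 separates the indices below 2^2^r from the others; the former are coded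
  by their 2^r binary digits, the latter by m digits in base 2^(r+1) scaled into [0,1].\<close>
definition code_point :: "nat \<Rightarrow> nat \<Rightarrow> nat \<Rightarrow> nat \<Rightarrow> real" where
  "code_point r m i j =
    (if j = 0 then (if i < 2 ^ 2 ^ r then -1 else 1)
     else if j \<le> 2 ^ r then (if i < 2 ^ 2 ^ r then real (digit 2 (j - 1) i) else 0)
     else if j < 1 + 2 ^ r + m then
       (if i < 2 ^ 2 ^ r then 0 else real (digit (2 ^ (r + 1)) (j - 1 - 2 ^ r) i) / 2 ^ (r + 1))
     else 0)"

definition code_count :: "nat \<Rightarrow> nat \<Rightarrow> nat" where
  "code_count r m = max ((2 ^ (r + 1)) ^ m) (2 ^ 2 ^ r)"

lemma code_point_Rk: "code_point r m i \<in> Rk (1 + 2 ^ r + m)"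
  by (auto simp: Rk_def code_point_def)

lemma code_point_bounded: "\<bar>code_point r m i j\<bar> \<le> 1"
proof -
  have "digit 2 t i \<le> 1" for t
    using digit_less[of 2 t i] by linarith
  moreover have "real (digit (2 ^ (r + 1)) t i) \<le> 2 ^ (r + 1)" for t
  proof -
    have "digit (2 ^ (r + 1)) t i \<le> 2 ^ (r + 1)"
      by (simp add: digit_less less_imp_le)
    then have "real (digit (2 ^ (r + 1)) t i) \<le> real ((2::nat) ^ (r + 1))"
      by (simp only: of_nat_le_iff)
    then show ?thesis
      by simp
  qed
  ultimately show ?thesis
    by (auto simp: code_point_def)
qed

lemma code_point_in_unit_ball: "code_point r m i \<in> unit_ball_Rk (1 + 2 ^ r + m) c0norm"
  using code_point_Rk code_point_bounded by (auto simp: unit_ball_Rk_def intro: c0norm_least)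

lemma one_le_c0norm_code_point: "1 \<le> c0norm (code_point r m i)"
  using c0norm_upper[OF Rk_imp_Bseq[OF code_point_Rk], of r m i 0]
  by (simp add: code_point_def split: if_splits)

lemma code_point_separated:
  assumes "i \<noteq> i'" and "i < code_count r m" and "i' < code_count r m"
  shows "sigma (i' + 1) \<le> 2 * c0norm (\<lambda>j. code_point r m i j - code_point r m i' j)"
proof -
  let ?T = "(2::nat) ^ 2 ^ r" and ?d = "\<lambda>j. code_point r m i j - code_point r m i' j"
  have nat_sep: "1 \<le> \<bar>real a - real b\<bar>" if "a \<noteq> b" for a b :: nat
    using that by (cases "a < b") auto
  have \<sigma>: "sigma (i' + 1) \<le> 1"
    by (rule sigma_le_one) simp
  have "\<exists>j. sigma (i' + 1) \<le> 2 * \<bar>?d j\<bar>"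
  proof (cases "i < ?T \<longleftrightarrow> i' < ?T")
    case False
    then have "\<bar>?d 0\<bar> = 2"
      by (auto simp: code_point_def)
    with \<sigma> show ?thesis
      by (intro exI[of _ 0]) simp
  next
    case same: True
    show ?thesis
    proof (cases "i < ?T")
      case True
      then obtain t where t: "t < 2 ^ r" "digit 2 t i \<noteq> digit 2 t i'"
        using digits_differ[of i 2 "2 ^ r" i'] same assms(1) by (auto simp: power_mult)
      then have "1 \<le> \<bar>?d (t + 1)\<bar>"
        using True same nat_sep[OF t(2)] by (simp add: code_point_def)
      with \<sigma> show ?thesis
        by (intro exI[of _ "t + 1"]) simp
    next
      case False
      then have "i < (2 ^ (r + 1)) ^ m" "i' < (2 ^ (r + 1)) ^ m"
        using same assms(2,3) by (auto simp: code_count_def)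
      then obtain t where t: "t < m" "digit (2 ^ (r + 1)) t i \<noteq> digit (2 ^ (r + 1)) t i'"
        using digits_differ assms(1) by blast
      have "?d (1 + 2 ^ r + t) =
          (real (digit (2 ^ (r + 1)) t i) - real (digit (2 ^ (r + 1)) t i')) / 2 ^ (r + 1)"
        using t(1) False same by (simp add: code_point_def diff_divide_distrib)
      then have "1 / 2 ^ (r + 1) \<le> \<bar>?d (1 + 2 ^ r + t)\<bar>"
        using nat_sep[OF t(2)] by (simp add: divide_right_mono)
      moreover have "sigma (i' + 1) \<le> 1 / real (2 ^ r)"
        using False same by (intro sigma_le_inverse) auto
      ultimately show ?thesis
        by (intro exI[of _ "1 + 2 ^ r + t"]) simp
    qed
  qed
  then show ?thesis
    using c0norm_upper[OF Rk_imp_Bseq[OF Rk_diff[OF code_point_Rk code_point_Rk]]]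
    by (meson mult_left_mono order_trans zero_le_numeral)
qed

lemma lip_width_Ksigma_le_tent_map:
  assumes "2 \<le> \<gamma>" and "1 \<le> m" and "1 + 2 ^ r + m \<le> n"
  shows "lip_width \<gamma> Ksigma n \<le> 1 / (real (r + 1) * real m)"
proof -
  let ?k = "1 + 2 ^ r + m" and ?P = "code_count r m" and ?h = "\<lambda>i. sigma (i + 1)"
  let ?\<Phi> = "tent_map ?P ?h (code_point r m)"
  have "sigma (i + 1) \<le> 2 * c0norm (code_point r m i)" for i
    using sigma_le_one[of "i + 1"] one_le_c0norm_code_point[of r m i] by simp
  then have \<Phi>_zero: "?\<Phi> (\<lambda>j. 0) = (\<lambda>i. 0)"
    by (intro tent_map_at_zero)
  have \<Phi>_code: "?\<Phi> (code_point r m i) = spike i" if "i < ?P" for i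
    using tent_map_at_center[OF that] code_point_separated that sigma_pos[of "i + 1"]
    by (simp add: spike_apply fun_eq_iff)
  show ?thesis
  proof (rule lip_width_le[OF Ksigma_bounded _ _ _ assms(3) c0norm_is_norm_on_Rk])
    show "?\<Phi> \<in> lip_maps \<gamma> ?k c0norm"
      using code_point_Rk assms(1) by (rule tent_map_in_lip_maps)
    fix f assume "f \<in> Ksigma"
    then consider "f = (\<lambda>i. 0)" | i where "f = spike i" "i < ?P" | i where "f = spike i" "?P \<le> i"
      unfolding Ksigma_eq by fastforce
    then show "\<exists>y\<in>unit_ball_Rk ?k c0norm. c0norm (\<lambda>j. f j - ?\<Phi> y j) \<le> 1 / (real (r + 1) * real m)"
    proof cases
      case 1
      then show ?thesis
        using zero_in_unit_ball_Rk[OF c0norm_is_norm_on_Rk] \<Phi>_zero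
        by (intro bexI[of _ "\<lambda>j. 0"]) auto
    next
      case (2 i)
      then show ?thesis
        using code_point_in_unit_ball \<Phi>_code by (intro bexI[of _ "code_point r m i"]) auto
    next
      case (3 i)
      then have "(2 ^ (r + 1)) ^ m \<le> i + 2"
        by (simp add: code_count_def)
      then have "2 ^ ((r + 1) * m) \<le> i + 2"
        by (simp only: power_mult)
      then have "sigma (i + 1) \<le> 1 / real ((r + 1) * m)"
        using assms(2) by (intro sigma_le_inverse) auto
      also have "\<dots> = 1 / (real (r + 1) * real m)"
        by (simp only: of_nat_mult)
      finally have "sigma (i + 1) \<le> 1 / (real (r + 1) * real m)" .
      then have "c0norm (\<lambda>j. f j - ?\<Phi> (\<lambda>j. 0) j) \<le> 1 / (real (r + 1) * real m)"
        using 3 sigma_pos[of "i + 1"] \<Phi>_zero by (intro c0norm_least) (simp add: spike_apply)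
      then show ?thesis
        using zero_in_unit_ball_Rk[OF c0norm_is_norm_on_Rk] by (intro bexI[of _ "\<lambda>j. 0"])
    qed
  qed (use assms in \<open>auto simp: Ksigma_eq\<close>)
qed

text \<open>Take 2^r ~ sqrt n and m ~ n/2.\<close>
lemma obtain_code_parameters:
  assumes "16 \<le> n"
  obtains r m where "1 \<le> m" and "1 + 2 ^ r + m \<le> n"
    and "real n * log 2 (real n + 1) \<le> 4 * (real (r + 1) * real m)"
proof -
  obtain a where a: "2 ^ a \<le> n" "n < 2 ^ (a + 1)"
    using ex_power_ivl1[of 2 n] assms by auto
  define r where "r = a div 2"
  define m where "m = n - 1 - 2 ^ r"
  have "(4 * 2 ^ r) ^ 2 = 16 * (2::nat) ^ (2 * r)"
    by (simp add: power_mult_distrib power_even_eq)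
  also have "\<dots> \<le> 16 * 2 ^ a"
    unfolding r_def by (intro mult_left_mono power_increasing) auto
  also have "\<dots> \<le> n ^ 2"
    using a(1) assms by (simp add: power2_eq_square mult_mono)
  finally have "4 * 2 ^ r \<le> n"
    by (rule power2_le_imp_le) simp
  then have m: "1 \<le> m" "1 + 2 ^ r + m \<le> n" "n \<le> 2 * m"
    using assms unfolding m_def by auto
  have "n + 1 \<le> 2 ^ (a + 1)"
    using a(2) by simp
  then have "real (n + 1) \<le> real (2 ^ (a + 1))"
    by (simp only: of_nat_le_iff)
  then have "real n + 1 \<le> 2 ^ (a + 1)"
    by simp
  then have "log 2 (real n + 1) \<le> log 2 (2 ^ (a + 1))"
    by (rule log_mono[rotated 2]) auto
  also have "\<dots> = real a + 1"
    by (subst log_pow_cancel) auto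
  also have "\<dots> \<le> 2 * real (r + 1)"
  proof -
    have "a + 1 \<le> 2 * (r + 1)"
      unfolding r_def by presburger
    then have "real (a + 1) \<le> real (2 * (r + 1))"
      by (simp only: of_nat_le_iff)
    then show ?thesis
      by simp
  qed
  finally have "real n * log 2 (real n + 1) \<le> (2 * real m) * (2 * real (r + 1))"
    using m(3) by (intro mult_mono) auto
  then show ?thesis
    using that[OF m(1,2)] by (simp add: algebra_simps)
qed

lemma lip_width_Ksigma_le:
  assumes "2 \<le> \<gamma>" and "1 \<le> n"
  shows "lip_width \<gamma> Ksigma n \<le> 64 / (real n * log 2 (real n + 1))"
proof -
  have pos: "0 < real n * log 2 (real n + 1)"
    using assms(2) by simp
  show ?thesis
  proof (cases "n < 16")
  case True
  have "real n + 1 \<le> 2 ^ 4"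
    using True by simp
  then have "log 2 (real n + 1) \<le> log 2 (2 ^ 4)"
    by (rule log_mono[rotated 2]) auto
  also have "log 2 (2 ^ 4) = (4::real)"
    by (subst log_pow_cancel) auto
  finally have "real n * log 2 (real n + 1) \<le> 15 * 4"
    using True by (intro mult_mono) auto
  then have "1 \<le> 64 / (real n * log 2 (real n + 1))"
    using pos by (simp add: le_divide_eq)
  moreover have "lip_width \<gamma> Ksigma n \<le> 1"
  proof (rule lip_width_le[OF Ksigma_bounded _ _ _ assms(2) c0norm_is_norm_on_Rk])
    show "(\<lambda>y i. 0) \<in> lip_maps \<gamma> 1 c0norm"
      using assms(1) by (intro zero_in_lip_maps c0norm_is_norm_on_Rk) simp
    show "\<exists>y\<in>unit_ball_Rk 1 c0norm. c0norm (\<lambda>i. f i - 0) \<le> 1" if "f \<in> Ksigma" for f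
    proof
      show "c0norm (\<lambda>i. f i - 0) \<le> 1"
        using that Ksigma_bounded by (intro c0norm_least) simp
    qed (rule zero_in_unit_ball_Rk[OF c0norm_is_norm_on_Rk])
  qed (use assms in \<open>auto simp: Ksigma_eq\<close>)
  ultimately show ?thesis
    by linarith
next
  case False
  then have "16 \<le> n"
    by simp
  then obtain r m where rm: "1 \<le> m" "1 + 2 ^ r + m \<le> n"
    and le: "real n * log 2 (real n + 1) \<le> 4 * (real (r + 1) * real m)"
    by (rule obtain_code_parameters)
  have "lip_width \<gamma> Ksigma n \<le> 1 / (real (r + 1) * real m)"
    using lip_width_Ksigma_le_tent_map[OF assms(1) rm] .
  also have "\<dots> = 4 / (4 * (real (r + 1) * real m))"
    by simp
  also have "\<dots> \<le> 4 / (real n * log 2 (real n + 1))"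
    using le pos by (intro frac_le) auto
  also have "\<dots> \<le> 64 / (real n * log 2 (real n + 1))"
    using pos by (intro divide_right_mono) auto
  finally show ?thesis .
qed
qed

section \<open>Lower bound for the Lipschitz widths\<close>

lemma spikes_separated: "i \<noteq> i' \<Longrightarrow> sigma (i + 1) \<le> c0norm (\<lambda>j. spike i j - spike i' j)"
  using spike_dist_ge[OF bounded_imp_Bseq[of "spike i'" 1, OF spike_bounded], of i]
  by (simp add: spike_apply sigma_pos abs_of_pos)

lemma power_add_le_add_power:
  fixes a b :: "'a::linordered_semidom"
  assumes "0 \<le> a" "0 \<le> b" "1 \<le> n"
  shows "a ^ n + b ^ n \<le> (a + b) ^ n"
  using \<open>1 \<le> n\<close>
proof (induction n rule: dec_induct)
  case (step n)
  have "(a + b) * (a ^ n + b ^ n) = (a ^ Suc n + b ^ Suc n) + (a * b ^ n + b * a ^ n)"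
    by (simp add: algebra_simps)
  moreover have "0 \<le> a * b ^ n + b * a ^ n"
    using assms(1,2) by simp
  ultimately have "a ^ Suc n + b ^ Suc n \<le> (a + b) * (a ^ n + b ^ n)"
    by (metis add_increasing2 order_refl)
  also have "\<dots> \<le> (a + b) * (a + b) ^ n"
    using step.IH assms(1,2) by (intro mult_left_mono) auto
  finally show ?case
    by simp
qed simp

lemma ex_power_ge_cubic:
  fixes c :: real
  obtains m :: nat where "0 < m" and "\<And>x. 1 \<le> x \<Longrightarrow> c * real m * x ^ 3 + 3 \<le> (x + 1) ^ m"
proof -
  have "eventually (\<lambda>s::nat. \<bar>c\<bar> * (real s + 3) + 3 \<le> 2 ^ s) sequentially"
    by real_asymp
  then obtain s where s: "\<bar>c\<bar> * (real s + 3) + 3 \<le> 2 ^ s"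
    by (auto simp: eventually_sequentially)
  show thesis
  proof (rule that[of "s + 3"])
    fix x :: real assume x: "1 \<le> x"
    have "c * (real s + 3) * x ^ 3 \<le> \<bar>c\<bar> * (real s + 3) * x ^ 3"
      using x by (intro mult_right_mono) auto
    moreover have "0 \<le> \<bar>c\<bar> * (real s + 3) + 3 * x ^ 3"
      using x by simp
    moreover have "(\<bar>c\<bar> * (real s + 3) + 3) * (x ^ 3 + 1)
        = \<bar>c\<bar> * (real s + 3) * x ^ 3 + (\<bar>c\<bar> * (real s + 3) + 3 * x ^ 3) + 3"
      by (simp add: algebra_simps)
    ultimately have "c * (real s + 3) * x ^ 3 + 3 \<le> (\<bar>c\<bar> * (real s + 3) + 3) * (x ^ 3 + 1)"
      by linarith
    also have "\<dots> \<le> (x + 1) ^ s * (x + 1) ^ 3"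
    proof (rule mult_mono)
      show "\<bar>c\<bar> * (real s + 3) + 3 \<le> (x + 1) ^ s"
        using s x by (smt (verit) power_mono)
      show "x ^ 3 + 1 \<le> (x + 1) ^ 3"
        using power_add_le_add_power[of x 1 3] x by simp
    qed (use x in auto)
    finally show "c * real (s + 3) * x ^ 3 + 3 \<le> (x + 1) ^ (s + 3)"
      by (simp add: power_add add.commute)
  qed simp
qed

lemma log2_le_self: "log 2 (real n + 1) \<le> real n"
proof -
  have "real (n + 1) \<le> real ((2::nat) ^ n)"
    using less_exp[of n] by (simp only: of_nat_le_iff)
  then have "log 2 (real n + 1) \<le> log 2 (2 ^ n)"
    by (intro log_mono) auto
  then show ?thesis
    by (simp add: log_pow_cancel)
qed

lemma packing_bound_less_spike_count:
  assumes m: "\<And>x. 1 \<le> x \<Longrightarrow> 6 * \<gamma> * real m * x ^ 3 + 3 \<le> (x + 1) ^ m"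
    and "0 \<le> \<gamma>" and k: "1 \<le> k" "k \<le> n"
  shows "(6 * \<gamma> * real m * real k * real n * log 2 (real n + 1) + 1) ^ k
    < real ((n + 1) ^ (m * n) - 1)"
proof -
  let ?L = "log 2 (real n + 1)" and ?A = "6 * \<gamma> * real m * real n ^ 3 + 1"
  have n: "1 \<le> n"
    using k by simp
  have "real k * real n * ?L \<le> real n * real n * real n"
    using k log2_le_self[of n] n by (intro mult_mono) auto
  then have "6 * \<gamma> * real m * real k * real n * ?L \<le> 6 * \<gamma> * real m * real n ^ 3"
    using \<open>0 \<le> \<gamma>\<close> by (simp add: power3_eq_cube mult.assoc mult_left_mono)
  then have "(6 * \<gamma> * real m * real k * real n * ?L + 1) ^ k \<le> ?A ^ k"
    using \<open>0 \<le> \<gamma>\<close> n by (intro power_mono) auto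
  also have "\<dots> \<le> ?A ^ n"
    using \<open>0 \<le> \<gamma>\<close> k by (intro power_increasing) auto
  also have "\<dots> < ?A ^ n + 2 ^ n - 1"
    using n by (simp add: power_increasing[of 1 n 2, simplified])
  also have "\<dots> \<le> (?A + 2) ^ n - 1"
    using power_add_le_add_power[of ?A 2 n] \<open>0 \<le> \<gamma>\<close> n by simp
  also have "\<dots> \<le> ((real n + 1) ^ m) ^ n - 1"
    using m[of "real n"] n \<open>0 \<le> \<gamma>\<close> by (simp add: power_mono)
  also have "\<dots> = real ((n + 1) ^ (m * n) - 1)"
    by (simp add: of_nat_diff power_mult add.commute)
  finally show ?thesis .
qed

lemma inverse_le_sigma_if_le_power:
  assumes "1 \<le> n" and "i + 2 \<le> (n + 1) ^ p"
  shows "1 / (real p * log 2 (real n + 1)) \<le> sigma (i + 1)"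
proof (rule inverse_le_sigma)
  have "real (i + 2) \<le> real ((n + 1) ^ p)"
    using assms(2) by (simp only: of_nat_le_iff)
  then have "log 2 (real (i + 1) + 1) \<le> log 2 ((real n + 1) ^ p)"
    by (intro log_mono) (auto simp: add.commute)
  then show "log 2 (real (i + 1) + 1) \<le> real p * log 2 (real n + 1)"
    using assms(1) by (simp add: log_nat_power)
qed simp

lemma SUP_approx_error_Ksigma_ge:
  assumes N: "is_norm_on_Rk k N" and k: "1 \<le> k" and \<Phi>: "\<Phi> \<in> lip_maps \<gamma> k N"
    and \<gamma>: "0 < \<gamma>" and \<delta>: "0 < \<delta>"
    and height: "\<And>i. i < M \<Longrightarrow> 3 * \<delta> \<le> sigma (i + 1)"
    and many: "(2 * real k * \<gamma> / \<delta> + 1) ^ k < real M"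
  shows "\<delta> \<le> (SUP f\<in>Ksigma. approx_error k N \<Phi> f)"
proof (rule SUP_approx_error_ge_if_separated[OF Ksigma_bounded N k \<Phi> \<gamma> \<delta>])
  show "spike ` {..<M} \<subseteq> Ksigma" "finite (spike ` {..<M})"
    by (auto simp: Ksigma_eq)
  show "3 * \<delta> \<le> c0norm (\<lambda>i. s i - s' i)"
    if S: "s \<in> spike ` {..<M}" "s' \<in> spike ` {..<M}" "s \<noteq> s'" for s s'
  proof -
    obtain i i' where "i < M" "s = spike i" "s' = spike i'" "i \<noteq> i'"
      using S by blast
    then show ?thesis
      using spikes_separated[of i i'] height[of i] by simp
  qed
  have "card (spike ` {..<M}) = M"
    by (simp add: card_image[OF inj_on_subset[OF inj_spike subset_UNIV]])
  with many show "(2 * real k * \<gamma> / \<delta> + 1) ^ k < real (card (spike ` {..<M}))"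
    by simp
qed

text \<open>With \<delta> = 1/(3 m n log(n+1)), the spikes of index below (n+1)^(m n) - 1
  are 3\<delta>-separated, and for m large (depending on \<gamma> only) there are more of them than
  a packing in a unit ball of dimension at most n can accommodate.\<close>
lemma lip_width_Ksigma_ge:
  assumes "0 < \<gamma>"
  obtains c where "0 < c"
    and "\<And>n. 1 \<le> n \<Longrightarrow> c / (real n * log 2 (real n + 1)) \<le> lip_width \<gamma> Ksigma n"
proof -
  obtain m where m0: "0 < m" and m: "\<And>x. 1 \<le> x \<Longrightarrow> 6 * \<gamma> * real m * x ^ 3 + 3 \<le> (x + 1) ^ m"
    using ex_power_ge_cubic[of "6 * \<gamma>"] by blast
  show thesis
  proof (rule that[of "1 / (3 * real m)"])
    show "0 < 1 / (3 * real m)"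
      using m0 by simp
    fix n :: nat assume n: "1 \<le> n"
    define L where "L = log 2 (real n + 1)"
    define \<delta> where "\<delta> = 1 / (3 * real m * real n * L)"
    have \<delta>: "0 < \<delta>"
      using m0 n by (simp add: \<delta>_def L_def)
    have "\<delta> \<le> lip_width \<gamma> Ksigma n"
    proof (rule lip_width_ge[OF n])
      fix k N \<Phi> assume k: "1 \<le> k" "k \<le> n" and N: "is_norm_on_Rk k N" and \<Phi>: "\<Phi> \<in> lip_maps \<gamma> k N"
      show "\<delta> \<le> (SUP f\<in>Ksigma. approx_error k N \<Phi> f)"
      proof (rule SUP_approx_error_Ksigma_ge[OF N k(1) \<Phi> assms \<delta>])
        show "3 * \<delta> \<le> sigma (i + 1)" if "i < (n + 1) ^ (m * n) - 1" for i
          using inverse_le_sigma_if_le_power[OF n, of i "m * n"] that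
          by (simp add: \<delta>_def L_def mult.assoc)
        have "2 * real k * \<gamma> / \<delta> = 6 * \<gamma> * real m * real k * real n * L"
          by (simp add: \<delta>_def ac_simps)
        then show "(2 * real k * \<gamma> / \<delta> + 1) ^ k < real ((n + 1) ^ (m * n) - 1)"
          using packing_bound_less_spike_count[OF m _ k] assms by (simp add: L_def)
      qed
    qed (use assms in simp)
    then show "1 / (3 * real m) / (real n * log 2 (real n + 1)) \<le> lip_width \<gamma> Ksigma n"
      by (simp add: \<delta>_def L_def)
  qed
qed

theorem theorem4p10:
  shows "(\<exists>c C. 0 < c \<and> 0 < C \<and> (\<forall>n::nat. n \<ge> 1 \<longrightarrow>
            c * (1 / real n) \<le> inner_entropy Ksigma n \<and>
            inner_entropy Ksigma n \<le> C * (1 / real n)))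
       \<and> (\<forall>\<gamma>::real. \<gamma> > 2 \<longrightarrow>
          (\<exists>c C. 0 < c \<and> 0 < C \<and> (\<forall>n::nat. n \<ge> 1 \<longrightarrow>
            c * (1 / (real n * log 2 (real n + 1))) \<le> lip_width \<gamma> Ksigma n \<and>
            lip_width \<gamma> Ksigma n \<le> C * (1 / (real n * log 2 (real n + 1))))))"
proof (intro conjI allI impI)
  show "\<exists>c C. 0 < c \<and> 0 < C \<and> (\<forall>n::nat. n \<ge> 1 \<longrightarrow>
      c * (1 / real n) \<le> inner_entropy Ksigma n \<and> inner_entropy Ksigma n \<le> C * (1 / real n))"
    using inner_entropy_Ksigma_ge inner_entropy_Ksigma_le
    by (intro exI[of _ "1 / 2"] exI[of _ 1]) simp
next
  fix \<gamma> :: real assume "\<gamma> > 2"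
  then obtain c where "0 < c"
    and lower: "\<And>n. 1 \<le> n \<Longrightarrow> c / (real n * log 2 (real n + 1)) \<le> lip_width \<gamma> Ksigma n"
    using lip_width_Ksigma_ge[of \<gamma>] by auto
  then show "\<exists>c C. 0 < c \<and> 0 < C \<and> (\<forall>n::nat. n \<ge> 1 \<longrightarrow>
      c * (1 / (real n * log 2 (real n + 1))) \<le> lip_width \<gamma> Ksigma n \<and>
      lip_width \<gamma> Ksigma n \<le> C * (1 / (real n * log 2 (real n + 1))))"
    using lip_width_Ksigma_le[of \<gamma>] \<open>\<gamma> > 2\<close> by (intro exI[of _ c] exI[of _ 64]) simp
qed

end
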